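(* Let $Z,W,Y$ be Hilbert spaces. Assume: $A$ (resp. $E$) is a closed densely defined operator on $Z$ (resp. $W$); $C:D(A)\to Y$ and $F:Y\to D(E^* )'$ are bounded; $A$ and $E$ are diagonalizable in Riesz bases $(z_j)_{j\ge1}$ of $Z$ and $(w_k)_{k\ge1}$ of $W$ with $Az_j=\lambda_jz_j$, $Ew_k=\mu_kw_k$; and $A$ and $E$ share no eigenvalue. Let $\mathcal{A}$ be the operator on $\mathcal{X}=Z\times W$ given by $\mathcal{A}(z,w)=(Az,\ FCz+E_{-1}w)$ on $D(\mathcal{A})=\{(z,w)\in D(A)\times W: E_{-1}w+FCz\in W\}$, whose eigenvectors are $\mathbf{Z}_k=(0,w_k)$ and $\mathbf{Z}_j=(z_j,(\lambda_j-E)^{-1}FCz_j)$. If $$\sum_j\|(\lambda_j-E)^{-1}FCz_j\|_W^2<\infty,$$ then the normalized eigenvectors $\{\mathbf{Z}_j/\|\mathbf{Z}_j\|_{\mathcal{X}}\}_j\cup\{\mathbf{Z}_k/\|\mathbf{Z}_k\|_{\mathcal{X}}\}_k$ form a Riesz basis of $\mathcal{X}$.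
   Context: $D(E^* )'$ denotes the dual of $D(E^* )$ with pivot $W$, $E_{-1}:W\to D(E^* )'$ the unique continuous extension of $E$, and $(\lambda_j-E)^{-1}$ is understood as the resolvent extended to $D(E^* )'\to W$. *)

theory Defs
  imports "HOL-Analysis.Analysis"
begin

text \<open>Complex Hilbert spaces are modelled as real Hilbert spaces
  (types of class real_inner and complete_space) together with a complex
  structure J (multiplication by the imaginary unit).\<close>

definition complex_structure :: "('a::real_inner \<Rightarrow> 'a) \<Rightarrow> bool" where
  "complex_structure J \<longleftrightarrow> linear J \<and> (\<forall>x. J (J x) = - x) \<and> (\<forall>x. norm (J x) = norm x)"

definition cscale :: "('a::real_vector \<Rightarrow> 'a) \<Rightarrow> complex \<Rightarrow> 'a \<Rightarrow> 'a" where
  "cscale J c x = Re c *\<^sub>R x + Im c *\<^sub>R J x"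

text \<open>complex inner product, linear in the first, antilinear in the second argument\<close>
definition cinner :: "('a::real_inner \<Rightarrow> 'a) \<Rightarrow> 'a \<Rightarrow> 'a \<Rightarrow> complex" where
  "cinner J x y = Complex (inner x y) (inner x (J y))"

definition csubspace :: "('a::real_vector \<Rightarrow> 'a) \<Rightarrow> 'a set \<Rightarrow> bool" where
  "csubspace J D \<longleftrightarrow> subspace D \<and> (\<forall>x\<in>D. J x \<in> D)"

definition clinear_on :: "('a::real_vector \<Rightarrow> 'a) \<Rightarrow> ('b::real_vector \<Rightarrow> 'b) \<Rightarrow> 'a set \<Rightarrow> ('a \<Rightarrow> 'b) \<Rightarrow> bool" where
  "clinear_on J1 J2 D f \<longleftrightarrow>
     (\<forall>x\<in>D. \<forall>y\<in>D. f (x + y) = f x + f y) \<and>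
     (\<forall>x\<in>D. \<forall>r. f (r *\<^sub>R x) = r *\<^sub>R f x) \<and>
     (\<forall>x\<in>D. f (J1 x) = J2 (f x))"

definition closed_densely_defined :: "('a::real_normed_vector \<Rightarrow> 'a) \<Rightarrow> 'a set \<Rightarrow> ('a \<Rightarrow> 'a) \<Rightarrow> bool" where
  "closed_densely_defined J D A \<longleftrightarrow>
     csubspace J D \<and> clinear_on J J D A \<and> closure D = UNIV \<and> closed ((\<lambda>x. (x, A x)) ` D)"

text \<open>C : D(A) \<rightarrow> Y bounded, D(A) carrying the graph norm\<close>
definition graph_bounded :: "'a set \<Rightarrow> ('a::real_normed_vector \<Rightarrow> 'a) \<Rightarrow> ('a \<Rightarrow> 'b::real_normed_vector) \<Rightarrow> bool" where
  "graph_bounded D A C \<longleftrightarrow> (\<exists>K. \<forall>x\<in>D. norm (C x) \<le> K * (norm x + norm (A x)))"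

definition adj_dom :: "('a::real_inner \<Rightarrow> 'a) \<Rightarrow> 'a set \<Rightarrow> ('a \<Rightarrow> 'a) \<Rightarrow> 'a set" where
  "adj_dom J D E = {\<phi>. \<exists>\<psi>. \<forall>w\<in>D. cinner J (E w) \<phi> = cinner J w \<psi>}"

definition adj :: "('a::real_inner \<Rightarrow> 'a) \<Rightarrow> 'a set \<Rightarrow> ('a \<Rightarrow> 'a) \<Rightarrow> 'a \<Rightarrow> 'a" where
  "adj J D E \<phi> = (SOME \<psi>. \<forall>w\<in>D. cinner J (E w) \<phi> = cinner J w \<psi>)"

text \<open>An element of D(E*)' (dual with pivot W) is a bounded
  antilinear functional on D(E*) equipped with the graph norm; Fb y \<phi> is the duality
  pairing of F y with \<phi>.\<close>
definition dual_bounded :: "('b::real_normed_vector \<Rightarrow> 'b) \<Rightarrow> ('a::real_inner \<Rightarrow> 'a) \<Rightarrow> 'a set \<Rightarrow> ('a \<Rightarrow> 'a)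
     \<Rightarrow> ('b \<Rightarrow> 'a \<Rightarrow> complex) \<Rightarrow> bool" where
  "dual_bounded JY JW Ds Es Fb \<longleftrightarrow>
     (\<forall>\<phi>\<in>Ds. (\<forall>y1 y2. Fb (y1 + y2) \<phi> = Fb y1 \<phi> + Fb y2 \<phi>) \<and>
              (\<forall>y r. Fb (r *\<^sub>R y) \<phi> = complex_of_real r * Fb y \<phi>) \<and>
              (\<forall>y. Fb (JY y) \<phi> = \<i> * Fb y \<phi>)) \<and>
     (\<forall>y. (\<forall>\<phi>\<in>Ds. \<forall>\<psi>\<in>Ds. Fb y (\<phi> + \<psi>) = Fb y \<phi> + Fb y \<psi>) \<and>
          (\<forall>\<phi>\<in>Ds. \<forall>r. Fb y (r *\<^sub>R \<phi>) = complex_of_real r * Fb y \<phi>) \<and>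
          (\<forall>\<phi>\<in>Ds. Fb y (JW \<phi>) = - \<i> * Fb y \<phi>)) \<and>
     (\<exists>K. \<forall>y. \<forall>\<phi>\<in>Ds. cmod (Fb y \<phi>) \<le> K * norm y * (norm \<phi> + norm (Es \<phi>)))"

definition in_resolvent :: "('a::real_normed_vector \<Rightarrow> 'a) \<Rightarrow> 'a set \<Rightarrow> ('a \<Rightarrow> 'a) \<Rightarrow> complex \<Rightarrow> bool" where
  "in_resolvent J D E l \<longleftrightarrow> bij_betw (\<lambda>x. cscale J l x - E x) D UNIV"

text \<open>extended resolvent (\<lambda> - E_{-1})^{-1} : D(E*)' \<rightarrow> W applied to v \<in> D(E*)':
  the unique g \<in> W with (\<lambda> - E_{-1}) g = v in D(E*)', i.e.
  \<lambda> <g,\<phi>> - <g, E*\<phi>> = v(\<phi>) for all \<phi> \<in> D(E*).\<close>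
definition ext_resolvent :: "('a::real_inner \<Rightarrow> 'a) \<Rightarrow> 'a set \<Rightarrow> ('a \<Rightarrow> 'a) \<Rightarrow> complex
     \<Rightarrow> ('a \<Rightarrow> complex) \<Rightarrow> 'a" where
  "ext_resolvent J D E l v =
     (THE g. \<forall>\<phi>\<in>adj_dom J D E. l * cinner J g \<phi> - cinner J g (adj J D E \<phi>) = v \<phi>)"

definition riesz_basis :: "('a::real_normed_vector \<Rightarrow> 'a) \<Rightarrow> ('i \<Rightarrow> 'a) \<Rightarrow> bool" where
  "riesz_basis J e \<longleftrightarrow>
     closure {(\<Sum>i\<in>S. cscale J (c i) (e i)) | S c. finite S} = UNIV \<and>
     (\<exists>a b. 0 < a \<and> 0 < b \<and>
        (\<forall>S c. finite S \<longrightarrow>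
           a * (\<Sum>i\<in>S. (cmod (c i))\<^sup>2) \<le> (norm (\<Sum>i\<in>S. cscale J (c i) (e i)))\<^sup>2 \<and>
           (norm (\<Sum>i\<in>S. cscale J (c i) (e i)))\<^sup>2 \<le> b * (\<Sum>i\<in>S. (cmod (c i))\<^sup>2)))"

definition prod_J :: "('a \<Rightarrow> 'a) \<Rightarrow> ('b \<Rightarrow> 'b) \<Rightarrow> 'a \<times> 'b \<Rightarrow> 'a \<times> 'b" where
  "prod_J J1 J2 = (\<lambda>(x, y). (J1 x, J2 y))"

end

theory Submission
  imports Defs
begin

text \<open>Only the Riesz basis property of \<open>(z\<^sub>j)\<close> and \<open>(w\<^sub>k)\<close> and the square summability of
  \<open>g\<^sub>j = (\<lambda>\<^sub>j - E)\<^sup>-\<^sup>1 F C z\<^sub>j\<close> matter.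
  A finite combination of the unnormalised vectors \<open>(z\<^sub>j, g\<^sub>j)\<close> and \<open>(0, w\<^sub>k)\<close> is
  \<open>(x, v + t)\<close> with \<open>x = \<Sum> c\<^sub>j z\<^sub>j\<close>, \<open>t = \<Sum> d\<^sub>k w\<^sub>k\<close> and, by Cauchy-Schwarz,
  \<open>\<parallel>v\<parallel>\<^sup>2 \<le> G \<Sum> \<bar>c\<^sub>j\<bar>\<^sup>2 \<le> (G / a) \<parallel>x\<parallel>\<^sup>2\<close>, where \<open>G = \<Sum> \<parallel>g\<^sub>j\<parallel>\<^sup>2\<close> and \<open>a\<close> is a lower Riesz
  bound. Hence the Riesz inequalities of the two bases survive the perturbation \<open>v\<close>.
  Completeness holds because \<open>{0} \<times> W\<close> lies in the closed span, so the \<open>g\<^sub>j\<close>-components can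
  be subtracted off. Finally, normalising a Riesz basis yields a Riesz basis, since the norms
  of its elements are bounded above and below.\<close>

lemma complex_structure_inner_J_J:
  assumes "complex_structure J"
  shows "inner (J x) (J y) = inner x y"
proof -
  have lin: "linear J" and isometric: "\<And>v. inner (J v) (J v) = inner v v"
    using assms by (simp_all add: complex_structure_def flip: power2_norm_eq_inner)
  have "inner (J x + J y) (J x + J y) = inner (x + y) (x + y)"
    using isometric[of "x + y"] lin by (simp add: linear_add)
  then show ?thesis
    using isometric[of x] isometric[of y] by (simp add: inner_add_left inner_add_right inner_commute)
qed

lemma complex_structure_inner_J:
  assumes "complex_structure J"
  shows "inner x (J x) = 0"
proof -
  have "inner (J x) (J (J x)) = inner x (J x)"
    by (rule complex_structure_inner_J_J[OF assms])
  with assms have "- inner (J x) x = inner x (J x)"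
    by (simp add: complex_structure_def)
  then show ?thesis by (simp add: inner_commute)
qed

lemma norm_cscale:
  assumes "complex_structure J"
  shows "norm (cscale J c x) = cmod c * norm x"
proof -
  have J_J: "inner (J x) (J x) = inner x x"
    by (rule complex_structure_inner_J_J[OF assms])
  have orth: "inner x (J x) = 0" "inner (J x) x = 0"
    using complex_structure_inner_J[OF assms, of x] by (simp_all add: inner_commute)
  have "(norm (cscale J c x))\<^sup>2 = inner (cscale J c x) (cscale J c x)"
    by (simp add: power2_norm_eq_inner)
  also have "\<dots> = (Re c)\<^sup>2 * inner x x + (Im c)\<^sup>2 * inner x x"
    by (simp add: cscale_def inner_add_left inner_add_right J_J orth power2_eq_square)
  also have "\<dots> = (cmod c * norm x)\<^sup>2"
    by (simp add: cmod_power2 power_mult_distrib power2_norm_eq_inner algebra_simps)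
  finally show ?thesis by (simp add: power2_eq_imp_eq)
qed

lemma cscale_zero [simp]: "cscale J 0 x = 0"
  by (simp add: cscale_def)

lemma cscale_one [simp]: "cscale J 1 x = x"
  by (simp add: cscale_def)

lemma cscale_add_left: "cscale J (a + b) x = cscale J a x + cscale J b x"
  by (simp add: cscale_def scaleR_add_left)

lemma cscale_zero_right: "linear J \<Longrightarrow> cscale J c 0 = 0"
  by (simp add: cscale_def linear_0)

lemma cscale_scaleR: "linear J \<Longrightarrow> cscale J c (r *\<^sub>R x) = cscale J (c * of_real r) x"
  by (simp add: cscale_def linear_cmul)

lemma cscale_sgn: "linear J \<Longrightarrow> cscale J c (sgn x) = cscale J (c / of_real (norm x)) x"
  by (simp add: sgn_div_norm cscale_scaleR divide_inverse)

lemma cscale_Pair: "cscale (prod_J J1 J2) c (x, y) = (cscale J1 c x, cscale J2 c y)"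
  by (simp add: cscale_def prod_J_def)

lemma sum_cscale_Pair:
  "(\<Sum>i\<in>S. cscale (prod_J J1 J2) (c i) (x i, y i)) =
     (\<Sum>i\<in>S. cscale J1 (c i) (x i), \<Sum>i\<in>S. cscale J2 (c i) (y i))"
  by (simp add: cscale_Pair sum_prod)

lemma linear_prod_J:
  fixes J1 :: "'a::real_vector \<Rightarrow> 'a" and J2 :: "'b::real_vector \<Rightarrow> 'b"
  assumes "linear J1" "linear J2"
  shows "linear (prod_J J1 J2)"
proof (rule linearI)
  fix p q :: "'a \<times> 'b" and r :: real
  show "prod_J J1 J2 (p + q) = prod_J J1 J2 p + prod_J J1 J2 q"
    and "prod_J J1 J2 (r *\<^sub>R p) = r *\<^sub>R prod_J J1 J2 p"
    using assms by (cases p, cases q, simp add: prod_J_def linear_add linear_cmul)+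
qed

lemma sum_vimage_Inl_Inr:
  assumes "finite S"
  shows "sum f S = sum (f \<circ> Inl) (Inl -` S) + sum (f \<circ> Inr) (Inr -` S)"
proof -
  have "S = Inl -` S <+> Inr -` S"
  proof (rule set_eqI)
    fix i show "i \<in> S \<longleftrightarrow> i \<in> Inl -` S <+> Inr -` S"
      by (cases i) auto
  qed
  moreover have "finite (Inl -` S)" "finite (Inr -` S)"
    using assms by (simp_all add: finite_vimageI)
  ultimately show ?thesis
    using sum.Plus by metis
qed

lemma norm_add_power2_le: "(norm (p + q))\<^sup>2 \<le> 2 * (norm p)\<^sup>2 + 2 * (norm q)\<^sup>2"
proof -
  have "(norm (p + q))\<^sup>2 \<le> (norm p + norm q)\<^sup>2"
    by (simp add: norm_triangle_ineq power_mono)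
  also have "\<dots> \<le> 2 * (norm p)\<^sup>2 + 2 * (norm q)\<^sup>2"
    using sum_squares_ge_zero[of "norm p - norm q" 0] by (simp add: power2_eq_square algebra_simps)
  finally show ?thesis .
qed

definition clinear_combinations :: "('a::real_vector \<Rightarrow> 'a) \<Rightarrow> ('i \<Rightarrow> 'a) \<Rightarrow> 'a set" where
  "clinear_combinations J e = {(\<Sum>i\<in>S. cscale J (c i) (e i)) | S c. finite S}"

definition riesz_bounds :: "('a::real_normed_vector \<Rightarrow> 'a) \<Rightarrow> ('i \<Rightarrow> 'a) \<Rightarrow> real \<Rightarrow> real \<Rightarrow> bool" where
  "riesz_bounds J e a b \<longleftrightarrow>
     (\<forall>S c. finite S \<longrightarrow>
        a * (\<Sum>i\<in>S. (cmod (c i))\<^sup>2) \<le> (norm (\<Sum>i\<in>S. cscale J (c i) (e i)))\<^sup>2 \<and>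
        (norm (\<Sum>i\<in>S. cscale J (c i) (e i)))\<^sup>2 \<le> b * (\<Sum>i\<in>S. (cmod (c i))\<^sup>2))"

lemma riesz_basis_iff:
  "riesz_basis J e \<longleftrightarrow>
     closure (clinear_combinations J e) = UNIV \<and> (\<exists>a b. 0 < a \<and> 0 < b \<and> riesz_bounds J e a b)"
  by (simp add: riesz_basis_def clinear_combinations_def riesz_bounds_def)

lemma riesz_bounds_norm:
  assumes "riesz_bounds J e a b"
  shows "a \<le> (norm (e i))\<^sup>2" and "(norm (e i))\<^sup>2 \<le> b"
  using assms[unfolded riesz_bounds_def, rule_format, of "{i}" "\<lambda>_. 1"] by simp_all

lemma riesz_bounds_mono:
  fixes e :: "'i \<Rightarrow> 'a::real_normed_vector"
  assumes bounds: "riesz_bounds J e a b" and "a' \<le> a" "b \<le> b'"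
  shows "riesz_bounds J e a' b'"
  unfolding riesz_bounds_def
proof (intro allI impI)
  fix S :: "'i set" and c :: "'i \<Rightarrow> complex"
  assume "finite S"
  let ?s = "\<Sum>i\<in>S. (cmod (c i))\<^sup>2" and ?n = "(norm (\<Sum>i\<in>S. cscale J (c i) (e i)))\<^sup>2"
  have "0 \<le> ?s"
    by (simp add: sum_nonneg)
  then have "a' * ?s \<le> a * ?s" "b * ?s \<le> b' * ?s"
    using assms(2,3) by (simp_all add: mult_right_mono)
  moreover have "a * ?s \<le> ?n" "?n \<le> b * ?s"
    using bounds \<open>finite S\<close> by (simp_all add: riesz_bounds_def)
  ultimately show "a' * ?s \<le> ?n \<and> ?n \<le> b' * ?s"
    by linarith
qed

lemma clinear_combinations_add:
  assumes "p \<in> clinear_combinations J e" "q \<in> clinear_combinations J e"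
  shows "p + q \<in> clinear_combinations J e"
proof -
  obtain S c T d where fin: "finite S" "finite T"
    and p: "p = (\<Sum>i\<in>S. cscale J (c i) (e i))" and q: "q = (\<Sum>i\<in>T. cscale J (d i) (e i))"
    using assms by (auto simp: clinear_combinations_def)
  define c' where "c' i = (if i \<in> S then c i else 0)" for i
  define d' where "d' i = (if i \<in> T then d i else 0)" for i
  have "p = (\<Sum>i\<in>S \<union> T. cscale J (c' i) (e i))"
    unfolding p c'_def by (rule sum.mono_neutral_cong_left) (use fin in auto)
  moreover have "q = (\<Sum>i\<in>S \<union> T. cscale J (d' i) (e i))"
    unfolding q d'_def by (rule sum.mono_neutral_cong_left) (use fin in auto)
  ultimately have "p + q = (\<Sum>i\<in>S \<union> T. cscale J (c' i + d' i) (e i))"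
    by (simp add: cscale_add_left sum.distrib)
  then show ?thesis
    using fin by (auto simp: clinear_combinations_def)
qed

lemma closure_clinear_combinations_add:
  fixes e :: "'i \<Rightarrow> 'a::real_normed_vector"
  assumes "p \<in> closure (clinear_combinations J e)" "q \<in> closure (clinear_combinations J e)"
  shows "p + q \<in> closure (clinear_combinations J e)"
proof -
  let ?C = "clinear_combinations J e"
  have "?C + ?C \<subseteq> ?C"
    by (auto elim!: set_plus_elim intro: clinear_combinations_add)
  then have "closure ?C + closure ?C \<subseteq> closure ?C"
    using closure_sum closure_mono by blast
  with assms show ?thesis by blast
qed

lemma clinear_combinations_compose:
  assumes "inj h"
  shows "clinear_combinations J (e \<circ> h) \<subseteq> clinear_combinations J e"
proof
  fix p assume "p \<in> clinear_combinations J (e \<circ> h)"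
  then obtain S c where "finite S" and p: "p = (\<Sum>i\<in>S. cscale J (c i) (e (h i)))"
    by (auto simp: clinear_combinations_def)
  have "p = (\<Sum>i\<in>h ` S. cscale J (c (inv h i)) (e i))"
    unfolding p using assms by (simp add: sum.reindex inj_on_subset)
  with \<open>finite S\<close> show "p \<in> clinear_combinations J e"
    by (auto simp: clinear_combinations_def)
qed

lemma riesz_basis_sgn:
  fixes e :: "'i \<Rightarrow> 'a::real_normed_vector"
  assumes "linear J" and "riesz_basis J e"
  shows "riesz_basis J (\<lambda>i. sgn (e i))"
proof -
  obtain a b where "0 < a" "0 < b" and dense: "closure (clinear_combinations J e) = UNIV"
    and bounds: "riesz_bounds J e a b"
    using assms(2) by (auto simp: riesz_basis_iff)
  note norm_e = riesz_bounds_norm[OF bounds]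
  have norm_pos: "0 < norm (e i)" for i
    using norm_e(1)[of i] \<open>0 < a\<close> by (auto simp: power2_eq_square)
  have rescale: "(\<Sum>i\<in>S. cscale J (c i) (sgn (e i))) = (\<Sum>i\<in>S. cscale J (c i / of_real (norm (e i))) (e i))"
    for S c by (simp add: cscale_sgn assms(1))
  have "clinear_combinations J (\<lambda>i. sgn (e i)) = clinear_combinations J e"
  proof (intro equalityI subsetI)
    fix p assume "p \<in> clinear_combinations J (\<lambda>i. sgn (e i))"
    then show "p \<in> clinear_combinations J e"
      by (auto simp: clinear_combinations_def rescale)
  next
    fix p assume "p \<in> clinear_combinations J e"
    then obtain S c where "finite S" and p: "p = (\<Sum>i\<in>S. cscale J (c i) (e i))"
      by (auto simp: clinear_combinations_def)
    have "p = (\<Sum>i\<in>S. cscale J (c i * of_real (norm (e i))) (sgn (e i)))"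
      unfolding p rescale using norm_pos by simp
    with \<open>finite S\<close> show "p \<in> clinear_combinations J (\<lambda>i. sgn (e i))"
      by (auto simp: clinear_combinations_def)
  qed
  moreover have "riesz_bounds J (\<lambda>i. sgn (e i)) (a / b) (b / a)"
    unfolding riesz_bounds_def
  proof (intro allI impI)
    fix S :: "'i set" and c :: "'i \<Rightarrow> complex"
    assume "finite S"
    define d where "d i = c i / of_real (norm (e i))" for i
    have d_sq: "(cmod (d i))\<^sup>2 = (cmod (c i))\<^sup>2 / (norm (e i))\<^sup>2" for i
      by (simp add: d_def norm_divide power_divide)
    have "(\<Sum>i\<in>S. (cmod (c i))\<^sup>2) / b \<le> (\<Sum>i\<in>S. (cmod (d i))\<^sup>2)"
      unfolding sum_divide_distrib d_sq
      by (intro sum_mono divide_left_mono norm_e(2)) (use norm_pos \<open>0 < b\<close> in auto)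
    moreover have "(\<Sum>i\<in>S. (cmod (d i))\<^sup>2) \<le> (\<Sum>i\<in>S. (cmod (c i))\<^sup>2) / a"
      unfolding sum_divide_distrib d_sq
      by (intro sum_mono divide_left_mono norm_e(1)) (use norm_pos \<open>0 < a\<close> in auto)
    moreover have "a * (\<Sum>i\<in>S. (cmod (d i))\<^sup>2) \<le> (norm (\<Sum>i\<in>S. cscale J (d i) (e i)))\<^sup>2"
      and "(norm (\<Sum>i\<in>S. cscale J (d i) (e i)))\<^sup>2 \<le> b * (\<Sum>i\<in>S. (cmod (d i))\<^sup>2)"
      using bounds \<open>finite S\<close> by (auto simp: riesz_bounds_def)
    ultimately show "a / b * (\<Sum>i\<in>S. (cmod (c i))\<^sup>2) \<le> (norm (\<Sum>i\<in>S. cscale J (c i) (sgn (e i))))\<^sup>2 \<and>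
        (norm (\<Sum>i\<in>S. cscale J (c i) (sgn (e i))))\<^sup>2 \<le> b / a * (\<Sum>i\<in>S. (cmod (c i))\<^sup>2)"
      unfolding rescale d_def[symmetric] using \<open>0 < a\<close> \<open>0 < b\<close>
      by (smt (verit, best) mult_left_mono times_divide_eq_left times_divide_eq_right)
  qed
  ultimately show ?thesis
    using dense \<open>0 < a\<close> \<open>0 < b\<close> unfolding riesz_basis_iff by (metis divide_pos_pos)
qed

lemma norm_Pair_perturbed_bounds:
  fixes x :: "'a::real_normed_vector" and v t :: "'b::real_normed_vector"
  assumes "0 < a" "0 \<le> b" "0 \<le> G" "0 \<le> D1" "0 \<le> D2"
    and x: "a * D1 \<le> (norm x)\<^sup>2" "(norm x)\<^sup>2 \<le> b * D1"
    and t: "a * D2 \<le> (norm t)\<^sup>2" "(norm t)\<^sup>2 \<le> b * D2"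
    and v: "(norm v)\<^sup>2 \<le> G * D1"
  shows "a * (D1 + D2) \<le> (3 + 2 * G / a) * (norm (x, v + t))\<^sup>2"
    and "(norm (x, v + t))\<^sup>2 \<le> (2 * b + 2 * G) * (D1 + D2)"
proof -
  have norm_xvt: "(norm (x, v + t))\<^sup>2 = (norm x)\<^sup>2 + (norm (v + t))\<^sup>2"
    by (simp add: norm_Pair)
  have "G * D1 \<le> G / a * (norm x)\<^sup>2"
    using mult_left_mono[OF x(1) \<open>0 \<le> G\<close>] \<open>0 < a\<close> by (simp add: field_simps)
  moreover have "(norm t)\<^sup>2 \<le> 2 * (norm (v + t))\<^sup>2 + 2 * (norm v)\<^sup>2"
    using norm_add_power2_le[of "v + t" "- v"] by simp
  moreover have "0 \<le> G / a * (norm (v + t))\<^sup>2"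
    using assms(1,3) by simp
  moreover have "(3 + 2 * G / a) * (norm (x, v + t))\<^sup>2 =
      3 * (norm x)\<^sup>2 + 3 * (norm (v + t))\<^sup>2 + 2 * (G / a * (norm x)\<^sup>2) + 2 * (G / a * (norm (v + t))\<^sup>2)"
    unfolding norm_xvt by (simp add: algebra_simps)
  ultimately show "a * (D1 + D2) \<le> (3 + 2 * G / a) * (norm (x, v + t))\<^sup>2"
    using x(1) t(1) v zero_le_power2[of "norm x"] zero_le_power2[of "norm (v + t)"]
    unfolding distrib_left by linarith
  have "0 \<le> b * D1" "0 \<le> b * D2" "0 \<le> G * D2"
    using assms(2-5) by simp_all
  then show "(norm (x, v + t))\<^sup>2 \<le> (2 * b + 2 * G) * (D1 + D2)"
    unfolding norm_xvt using norm_add_power2_le[of v t] x(2) t(2) v by (simp add: algebra_simps)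
qed

lemma riesz_bounds_Pair_perturbation:
  fixes JZ :: "'z::real_normed_vector \<Rightarrow> 'z" and JW :: "'w::real_inner \<Rightarrow> 'w"
    and z :: "'i \<Rightarrow> 'z" and g :: "'i \<Rightarrow> 'w" and w :: "'k \<Rightarrow> 'w"
  assumes "linear JZ" "complex_structure JW"
    and bounds_z: "riesz_bounds JZ z a b" and bounds_w: "riesz_bounds JW w a b"
    and "0 < a" "0 \<le> b" "0 \<le> G"
    and g_bound: "\<And>S. finite S \<Longrightarrow> (\<Sum>j\<in>S. (norm (g j))\<^sup>2) \<le> G"
  shows "riesz_bounds (prod_J JZ JW) (case_sum (\<lambda>j. (z j, g j)) (\<lambda>k. (0, w k)))
           (a / (3 + 2 * G / a)) (2 * b + 2 * G)"
  unfolding riesz_bounds_def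
proof (intro allI impI)
  fix S :: "('i + 'k) set" and c :: "'i + 'k \<Rightarrow> complex"
  assume "finite S"
  define S1 S2 where "S1 = Inl -` S" and "S2 = Inr -` S"
  have fin: "finite S1" "finite S2"
    using \<open>finite S\<close> by (simp_all add: S1_def S2_def finite_vimageI)
  define x where "x = (\<Sum>j\<in>S1. cscale JZ (c (Inl j)) (z j))"
  define v where "v = (\<Sum>j\<in>S1. cscale JW (c (Inl j)) (g j))"
  define t where "t = (\<Sum>k\<in>S2. cscale JW (c (Inr k)) (w k))"
  define D1 where "D1 = (\<Sum>j\<in>S1. (cmod (c (Inl j)))\<^sup>2)"
  define D2 where "D2 = (\<Sum>k\<in>S2. (cmod (c (Inr k)))\<^sup>2)"
  have combination: "(\<Sum>i\<in>S. cscale (prod_J JZ JW) (c i) (case_sum (\<lambda>j. (z j, g j)) (\<lambda>k. (0, w k)) i))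
      = (x, v + t)"
    unfolding sum_vimage_Inl_Inr[OF \<open>finite S\<close>]
    by (simp add: S1_def S2_def x_def v_def t_def o_def sum_cscale_Pair cscale_zero_right[OF \<open>linear JZ\<close>])
  have coefficients: "(\<Sum>i\<in>S. (cmod (c i))\<^sup>2) = D1 + D2"
    unfolding sum_vimage_Inl_Inr[OF \<open>finite S\<close>] by (simp add: S1_def S2_def D1_def D2_def o_def)
  have x: "a * D1 \<le> (norm x)\<^sup>2" "(norm x)\<^sup>2 \<le> b * D1"
    using bounds_z fin(1) by (simp_all add: riesz_bounds_def x_def D1_def)
  have t: "a * D2 \<le> (norm t)\<^sup>2" "(norm t)\<^sup>2 \<le> b * D2"
    using bounds_w fin(2) by (simp_all add: riesz_bounds_def t_def D2_def)
  have "norm v \<le> (\<Sum>j\<in>S1. norm (cscale JW (c (Inl j)) (g j)))"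
    unfolding v_def by (rule norm_sum)
  also have "\<dots> = (\<Sum>j\<in>S1. cmod (c (Inl j)) * norm (g j))"
    by (simp add: norm_cscale[OF \<open>complex_structure JW\<close>])
  finally have "(norm v)\<^sup>2 \<le> (\<Sum>j\<in>S1. cmod (c (Inl j)) * norm (g j))\<^sup>2"
    by (simp add: power_mono)
  also have "\<dots> \<le> D1 * (\<Sum>j\<in>S1. (norm (g j))\<^sup>2)"
    unfolding D1_def by (rule Cauchy_Schwarz_ineq_sum)
  also have "\<dots> \<le> D1 * G"
    unfolding D1_def by (intro mult_left_mono g_bound fin sum_nonneg) simp
  finally have v: "(norm v)\<^sup>2 \<le> G * D1"
    by (simp add: mult.commute)
  have "0 \<le> D1" "0 \<le> D2"
    by (simp_all add: D1_def D2_def sum_nonneg)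
  note perturbed = norm_Pair_perturbed_bounds[OF \<open>0 < a\<close> \<open>0 \<le> b\<close> \<open>0 \<le> G\<close> this x t v]
  have "0 < 3 + 2 * G / a"
    using \<open>0 < a\<close> \<open>0 \<le> G\<close> by (simp add: add_pos_nonneg)
  then have "a / (3 + 2 * G / a) * (D1 + D2) \<le> (norm (x, v + t))\<^sup>2"
    using perturbed(1) by (simp add: pos_divide_le_eq mult.commute)
  then show "a / (3 + 2 * G / a) * (\<Sum>i\<in>S. (cmod (c i))\<^sup>2)
      \<le> (norm (\<Sum>i\<in>S. cscale (prod_J JZ JW) (c i) (case_sum (\<lambda>j. (z j, g j)) (\<lambda>k. (0, w k)) i)))\<^sup>2 \<and>
    (norm (\<Sum>i\<in>S. cscale (prod_J JZ JW) (c i) (case_sum (\<lambda>j. (z j, g j)) (\<lambda>k. (0, w k)) i)))\<^sup>2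
      \<le> (2 * b + 2 * G) * (\<Sum>i\<in>S. (cmod (c i))\<^sup>2)"
    unfolding combination coefficients using perturbed(2) by simp
qed

lemma closure_clinear_combinations_Pair_perturbation:
  fixes JZ :: "'z::real_normed_vector \<Rightarrow> 'z" and JW :: "'w::real_normed_vector \<Rightarrow> 'w"
    and z :: "'i \<Rightarrow> 'z" and g :: "'i \<Rightarrow> 'w" and w :: "'k \<Rightarrow> 'w"
  assumes "linear JZ"
    and dense_z: "closure (clinear_combinations JZ z) = UNIV"
    and dense_w: "closure (clinear_combinations JW w) = UNIV"
  shows "closure (clinear_combinations (prod_J JZ JW) (case_sum (\<lambda>j. (z j, g j)) (\<lambda>k. (0, w k)))) = UNIV"
proof -
  let ?u = "case_sum (\<lambda>j. (z j, g j)) (\<lambda>k. (0, w k))"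
  let ?P = "clinear_combinations (prod_J JZ JW) ?u"
  have closure_image: "f x \<in> closure ?P"
    if "bounded_linear f" "f ` S \<subseteq> closure ?P" "closure S = UNIV" for f x and S :: "'b::real_normed_vector set"
    using image_closure_subset[OF linear_continuous_on[OF that(1)] closed_closure that(2)] that(3)
    by auto
  have "(0, y) \<in> ?P" if y_comb: "y \<in> clinear_combinations JW w" for y
  proof -
    obtain S c where "finite S" and y: "y = (\<Sum>k\<in>S. cscale JW (c k) (w k))"
      using y_comb by (auto simp: clinear_combinations_def)
    have "(0, y) = (\<Sum>k\<in>S. cscale (prod_J JZ JW) (c k) ((?u \<circ> Inr) k))"
      unfolding y by (simp add: sum_cscale_Pair cscale_zero_right[OF \<open>linear JZ\<close>])
    with \<open>finite S\<close> have "(0, y) \<in> clinear_combinations (prod_J JZ JW) (?u \<circ> Inr)"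
      unfolding clinear_combinations_def by blast
    moreover have "clinear_combinations (prod_J JZ JW) (?u \<circ> Inr) \<subseteq> ?P"
      by (rule clinear_combinations_compose) simp
    ultimately show ?thesis
      by blast
  qed
  then have vertical: "(0, y) \<in> closure ?P" for y
    using closure_subset
    by (intro closure_image[OF _ _ dense_w] bounded_linear_Pair bounded_linear_zero bounded_linear_ident) auto
  have "(x, 0) \<in> closure ?P" if x_comb: "x \<in> clinear_combinations JZ z" for x
  proof -
    obtain S c where "finite S" and x: "x = (\<Sum>j\<in>S. cscale JZ (c j) (z j))"
      using x_comb by (auto simp: clinear_combinations_def)
    define v where "v = (\<Sum>j\<in>S. cscale JW (c j) (g j))"
    have "(x, v) = (\<Sum>j\<in>S. cscale (prod_J JZ JW) (c j) ((?u \<circ> Inl) j))"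
      unfolding x v_def by (simp add: sum_cscale_Pair)
    with \<open>finite S\<close> have "(x, v) \<in> clinear_combinations (prod_J JZ JW) (?u \<circ> Inl)"
      unfolding clinear_combinations_def by blast
    moreover have "clinear_combinations (prod_J JZ JW) (?u \<circ> Inl) \<subseteq> ?P"
      by (rule clinear_combinations_compose) simp
    ultimately have "(x, v) \<in> closure ?P"
      using closure_subset by blast
    then have "(x, v) + (0, - v) \<in> closure ?P"
      using vertical by (rule closure_clinear_combinations_add)
    then show ?thesis
      by simp
  qed
  then have horizontal: "(x, 0) \<in> closure ?P" for x
    by (intro closure_image[OF _ _ dense_z] bounded_linear_Pair bounded_linear_zero bounded_linear_ident) auto
  have "(x, 0) + (0, y) \<in> closure ?P" for x y
    using horizontal vertical by (rule closure_clinear_combinations_add)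
  then show ?thesis
    by auto
qed

lemma riesz_basis_Pair_perturbation:
  fixes JZ :: "'z::real_normed_vector \<Rightarrow> 'z" and JW :: "'w::real_inner \<Rightarrow> 'w"
    and z :: "nat \<Rightarrow> 'z" and g :: "nat \<Rightarrow> 'w" and w :: "'k \<Rightarrow> 'w"
  assumes "linear JZ" "complex_structure JW" "riesz_basis JZ z" "riesz_basis JW w"
    and g: "summable (\<lambda>j. (norm (g j))\<^sup>2)"
  shows "riesz_basis (prod_J JZ JW) (case_sum (\<lambda>j. (z j, g j)) (\<lambda>k. (0, w k)))"
proof -
  obtain aZ bZ aW bW where "0 < aZ" "0 < bZ" "0 < aW" "0 < bW"
    and dense_z: "closure (clinear_combinations JZ z) = UNIV" and bounds_z: "riesz_bounds JZ z aZ bZ"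
    and dense_w: "closure (clinear_combinations JW w) = UNIV" and bounds_w: "riesz_bounds JW w aW bW"
    using assms(3,4) unfolding riesz_basis_iff by blast
  define a b where "a = min aZ aW" and "b = max bZ bW"
  have "0 < a" "0 < b"
    using \<open>0 < aZ\<close> \<open>0 < aW\<close> \<open>0 < bZ\<close> by (simp_all add: a_def b_def)
  have "riesz_bounds JZ z a b" "riesz_bounds JW w a b"
    by (rule riesz_bounds_mono[OF bounds_z], simp add: a_def, simp add: b_def)
       (rule riesz_bounds_mono[OF bounds_w], simp add: a_def, simp add: b_def)
  define G where "G = (\<Sum>j. (norm (g j))\<^sup>2)"
  have "0 \<le> G"
    unfolding G_def using g by (simp add: suminf_nonneg)
  have "(\<Sum>j\<in>S. (norm (g j))\<^sup>2) \<le> G" if "finite S" for S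
    unfolding G_def using g that by (simp add: sum_le_suminf)
  note bounds = riesz_bounds_Pair_perturbation[OF assms(1,2) \<open>riesz_bounds JZ z a b\<close>
      \<open>riesz_bounds JW w a b\<close> \<open>0 < a\<close> less_imp_le[OF \<open>0 < b\<close>] \<open>0 \<le> G\<close> this]
  have "0 < a / (3 + 2 * G / a)" "0 < 2 * b + 2 * G"
    using \<open>0 < a\<close> \<open>0 < b\<close> \<open>0 \<le> G\<close> by (simp_all add: add_pos_nonneg)
  with bounds show ?thesis
    unfolding riesz_basis_iff
    using closure_clinear_combinations_Pair_perturbation[OF assms(1) dense_z dense_w] by fastforce
qed

theorem proposition2p9:
  fixes JZ :: "'z::{real_inner,complete_space} \<Rightarrow> 'z"
    and JW :: "'w::{real_inner,complete_space} \<Rightarrow> 'w"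
    and JY :: "'y::{real_inner,complete_space} \<Rightarrow> 'y"
    and DA :: "'z set" and A :: "'z \<Rightarrow> 'z"
    and DE :: "'w set" and E :: "'w \<Rightarrow> 'w"
    and C :: "'z \<Rightarrow> 'y"
    and F :: "'y \<Rightarrow> 'w \<Rightarrow> complex"
    and z :: "nat \<Rightarrow> 'z" and w :: "nat \<Rightarrow> 'w"
    and lam mu :: "nat \<Rightarrow> complex"
  assumes "complex_structure JZ" and "complex_structure JW" and "complex_structure JY"
    and "closed_densely_defined JZ DA A"
    and "closed_densely_defined JW DE E"
    and "clinear_on JZ JY DA C" and "graph_bounded DA A C"
    and "dual_bounded JY JW (adj_dom JW DE E) (adj JW DE E) F"
    and "riesz_basis JZ z" and "\<forall>j. z j \<in> DA \<and> A (z j) = cscale JZ (lam j) (z j)"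
    and "riesz_basis JW w" and "\<forall>k. w k \<in> DE \<and> E (w k) = cscale JW (mu k) (w k)"
    and "\<forall>j k. lam j \<noteq> mu k"
    and "\<forall>j. in_resolvent JW DE E (lam j)"
    and "summable (\<lambda>j. (norm (ext_resolvent JW DE E (lam j) (F (C (z j)))))\<^sup>2)"
  shows "riesz_basis (prod_J JZ JW)
           (\<lambda>i. case i of
                   Inl j \<Rightarrow> sgn (z j, ext_resolvent JW DE E (lam j) (F (C (z j))))
                 | Inr k \<Rightarrow> sgn ((0::'z), w k))"
proof -
  have "linear JZ" "linear JW"
    using assms(1,2) by (simp_all add: complex_structure_def)
  then have "riesz_basis (prod_J JZ JW) (\<lambda>i. sgn (case_sum
      (\<lambda>j. (z j, ext_resolvent JW DE E (lam j) (F (C (z j))))) (\<lambda>k. ((0::'z), w k)) i))"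
    by (intro riesz_basis_sgn linear_prod_J riesz_basis_Pair_perturbation assms(2,9,11,15))
  then show ?thesis
    by (simp add: sum.case_distrib)
qed

end
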